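(* Let $F$ be a field with $\mathrm{char}\,F\neq 2$, and let $I_n$ be the $F$-algebra defined in the context. (a) If $F$ is totally real, then for every $n\ge1$ and every $\lambda\in F$, every Rota--Baxter operator of weight $\lambda$ on $I_n$ is trivial, i.e. equals $0$ or $-\lambda\,\mathrm{id}$. (b) If $F$ is quadratically closed, then for every $n\ge 2$ and every nonzero $\lambda\in F$ there exists a nontrivial Rota--Baxter operator of weight $\lambda$ on $I_n$ (i.e. one different from $0$ and $-\lambda\,\mathrm{id}$), and for every $n\ge 3$ there exists a nonzero Rota--Baxter operator of weight $0$ on $I_n$.
   Context: $I_n$ denotes the $n$-dimensional (non-associative) algebra over $F$ with basis $e_1,\ldots,e_n$ and multiplication given by $e_n\cdot e_n=2e_n$, $e_n\cdot e_j=e_j$, $e_j\cdot e_j=e_n$ for $j=1,\ldots,n-1$, with all other products of basis elements equal to zero (extended bilinearly). A linear operator $R\colon A\to A$ is a Rota--Baxter operator of weight $\lambda\in F$ if $R(x)R(y)=R(R(x)y+xR(y)+\lambda xy)$ for all $x,y\in A$. The operators $0$ and $-\lambda\,\mathrm{id}$ are always Rota--Baxter operators of weight $\lambda$ and are called trivial. A field $F$ is totally real if $\nu_1^2+\cdots+\nu_t^2=0$ with $\nu_i\in F$ implies $\nu_1=\cdots=\nu_t=0$. A field is quadratically closed if every quadratic equation over it has a solution in it. *)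

theory Defs
  imports Main
begin

definition In_vecs :: "nat \<Rightarrow> (nat \<Rightarrow> 'a::field) set" where
  "In_vecs n = {x. \<forall>i. i \<notin> {1..n} \<longrightarrow> x i = 0}"

definition In_basis :: "nat \<Rightarrow> nat \<Rightarrow> 'a::field" where
  "In_basis i = (\<lambda>k. if k = i then 1 else 0)"

definition In_table :: "nat \<Rightarrow> nat \<Rightarrow> nat \<Rightarrow> (nat \<Rightarrow> 'a::field)" where
  "In_table n i j =
     (if i = n \<and> j = n then (\<lambda>k. 2 * In_basis n k)
      else if i = n \<and> 1 \<le> j \<and> j < n then In_basis j
      else if 1 \<le> i \<and> i < n \<and> j = i then In_basis n
      else (\<lambda>k. 0))"

definition In_mult :: "nat \<Rightarrow> (nat \<Rightarrow> 'a::field) \<Rightarrow> (nat \<Rightarrow> 'a) \<Rightarrow> (nat \<Rightarrow> 'a)" where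
  "In_mult n x y = (\<lambda>k. \<Sum>i\<in>{1..n}. \<Sum>j\<in>{1..n}. x i * y j * In_table n i j k)"

definition In_linear_op :: "nat \<Rightarrow> ((nat \<Rightarrow> 'a::field) \<Rightarrow> (nat \<Rightarrow> 'a)) \<Rightarrow> bool" where
  "In_linear_op n R \<longleftrightarrow>
     (\<forall>x\<in>In_vecs n. R x \<in> In_vecs n) \<and>
     (\<forall>x\<in>In_vecs n. \<forall>y\<in>In_vecs n. R (\<lambda>k. x k + y k) = (\<lambda>k. R x k + R y k)) \<and>
     (\<forall>c. \<forall>x\<in>In_vecs n. R (\<lambda>k. c * x k) = (\<lambda>k. c * R x k))"

definition In_RB :: "nat \<Rightarrow> 'a::field \<Rightarrow> ((nat \<Rightarrow> 'a) \<Rightarrow> (nat \<Rightarrow> 'a)) \<Rightarrow> bool" where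
  "In_RB n lam R \<longleftrightarrow> In_linear_op n R \<and>
     (\<forall>x\<in>In_vecs n. \<forall>y\<in>In_vecs n.
        In_mult n (R x) (R y) =
        R (\<lambda>k. In_mult n (R x) y k + In_mult n x (R y) k + lam * In_mult n x y k))"

definition In_zero_op :: "nat \<Rightarrow> ((nat \<Rightarrow> 'a::field) \<Rightarrow> (nat \<Rightarrow> 'a)) \<Rightarrow> bool" where
  "In_zero_op n R \<longleftrightarrow> (\<forall>x\<in>In_vecs n. R x = (\<lambda>k. 0))"

definition In_trivial_op :: "nat \<Rightarrow> 'a::field \<Rightarrow> ((nat \<Rightarrow> 'a) \<Rightarrow> (nat \<Rightarrow> 'a)) \<Rightarrow> bool" where
  "In_trivial_op n lam R \<longleftrightarrow>
     In_zero_op n R \<or> (\<forall>x\<in>In_vecs n. R x = (\<lambda>k. - lam * x k))"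

definition totally_real_field :: "'a::field itself \<Rightarrow> bool" where
  "totally_real_field _ \<longleftrightarrow>
     (\<forall>(\<nu>::nat \<Rightarrow> 'a) t. (\<Sum>i<t. \<nu> i ^ 2) = 0 \<longrightarrow> (\<forall>i<t. \<nu> i = 0))"

definition quadratically_closed :: "'a::field itself \<Rightarrow> bool" where
  "quadratically_closed _ \<longleftrightarrow>
     (\<forall>a b c :: 'a. a \<noteq> 0 \<longrightarrow> (\<exists>x. a * x ^ 2 + b * x + c = 0))"

end

theory Submission
  imports Defs
begin

(* Write e = e_n and <x, y> = x_1 y_1 + ... + x_(n-1) y_(n-1); then x y = x_n y + (x_n y_n + <x, y>) e.
   For a Rota-Baxter operator R put rho = R e and sigma = rho_n, and evaluate the Rota-Baxter
   identity on the pairs (e, e), (u, e), (e, u), (u, u) with u_n = 0. Over a totally real field,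
   where c^2 + <w, w> = 0 forces c = 0 and w = 0, the resulting scalar identities show that
   rho = sigma e (otherwise lam = -2 sigma and sigma^2 + <rho, rho> = 0), then that
   sigma (sigma + lam) = 0, and finally that R u = sigma u for all u with u_n = 0; hence R = sigma id.
   Conversely, if i^2 = -1 then e_1 + i e_2 is isotropic, and this yields the operators
   x |-> x_1 lam (i e_n - e_1) of weight lam and x |-> (x_1 + i x_2)(e_1 + i e_2) of weight 0. *)

definition In_dot :: "nat \<Rightarrow> (nat \<Rightarrow> 'a::field) \<Rightarrow> (nat \<Rightarrow> 'a) \<Rightarrow> 'a" where
  "In_dot n x y = (\<Sum>j\<in>{1..<n}. x j * y j)"

definition In_proj :: "nat \<Rightarrow> (nat \<Rightarrow> 'a::field) \<Rightarrow> nat \<Rightarrow> 'a" where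
  "In_proj n x = (\<lambda>k. x k - x n * In_basis n k)"

lemma In_basis_same [simp]: "In_basis i i = 1"
  and In_basis_other [simp]: "k \<noteq> i \<Longrightarrow> In_basis i k = 0"
  by (simp_all add: In_basis_def)

lemma In_dot_commute: "In_dot n x y = In_dot n y x"
  unfolding In_dot_def by (simp add: mult.commute)

lemma In_dot_basis_right [simp]: "In_dot n x (In_basis n) = 0"
  unfolding In_dot_def In_basis_def by simp

lemma In_dot_basis_left [simp]: "In_dot n (In_basis n) x = 0"
  unfolding In_dot_def In_basis_def by simp

lemma In_dot_In_proj_left [simp]: "In_dot n (In_proj n x) y = In_dot n x y"
  unfolding In_dot_def In_proj_def In_basis_def by (intro sum.cong) auto

lemma In_dot_diff_scaled_self:
  "In_dot n (\<lambda>k. x k - c * y k) (\<lambda>k. x k - c * y k)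
     = In_dot n x x - 2 * c * In_dot n x y + c * c * In_dot n y y"
  unfolding In_dot_def by (simp add: sum_subtractf sum.distrib sum_distrib_left algebra_simps)

lemma In_dot_supported:
  assumes "A \<subseteq> {1..<n}" and "\<And>j. j \<in> {1..<n} \<Longrightarrow> j \<notin> A \<Longrightarrow> x j = 0"
  shows "In_dot n x y = (\<Sum>j\<in>A. x j * y j)"
  unfolding In_dot_def using assms by (intro sum.mono_neutral_right) auto

lemma In_basis_in_In_vecs: "1 \<le> i \<Longrightarrow> i \<le> n \<Longrightarrow> In_basis i \<in> In_vecs n"
  by (auto simp: In_basis_def In_vecs_def)

lemma In_proj_in_In_vecs: "x \<in> In_vecs n \<Longrightarrow> In_proj n x \<in> In_vecs n"
  by (auto simp: In_proj_def In_vecs_def In_basis_def)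

lemma In_proj_last [simp]: "In_proj n x n = 0"
  by (simp add: In_proj_def In_basis_def)

lemma In_vecs_eqI:
  assumes "x \<in> In_vecs n" "y \<in> In_vecs n" "x n = y n" "\<And>j. 1 \<le> j \<Longrightarrow> j < n \<Longrightarrow> x j = y j"
  shows "x = y"
proof
  fix k
  consider "1 \<le> k" "k < n" | "k = n" | "k \<notin> {1..n}" by fastforce
  then show "x k = y k" using assms by cases (auto simp: In_vecs_def)
qed

lemma In_mult_eq:
  assumes n: "1 \<le> n" and y: "y \<in> In_vecs n"
  shows "In_mult n x y = (\<lambda>k. x n * y k + (x n * y n + In_dot n x y) * In_basis n k)"
proof
  fix k
  have split: "{1..n} = insert n {1..<n}" using n by auto
  have row_i: "(\<Sum>j\<in>{1..n}. x i * y j * In_table n i j k) = x i * y i * In_basis n k"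
    if i: "i \<in> {1..<n}" for i
  proof -
    have "(\<Sum>j\<in>{1..n}. x i * y j * In_table n i j k)
        = (\<Sum>j\<in>{1..<n}. x i * y j * In_table n i j k)"
      unfolding split using i by (simp add: In_table_def)
    also have "\<dots> = (\<Sum>j\<in>{1..<n}. if j = i then x i * y i * In_basis n k else 0)"
      using i by (intro sum.cong) (auto simp: In_table_def)
    finally show ?thesis using i by simp
  qed
  have row_n: "(\<Sum>j\<in>{1..n}. x n * y j * In_table n n j k)
      = 2 * x n * y n * In_basis n k + (if k \<in> {1..<n} then x n * y k else 0)"
  proof -
    have "(\<Sum>j\<in>{1..<n}. x n * y j * In_table n n j k)
        = (\<Sum>j\<in>{1..<n}. if k = j then x n * y k else 0)"
      by (intro sum.cong) (auto simp: In_table_def In_basis_def)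
    then show ?thesis unfolding split by (simp add: In_table_def)
  qed
  have "In_mult n x y k = (\<Sum>j\<in>{1..n}. x n * y j * In_table n n j k)
      + (\<Sum>i\<in>{1..<n}. \<Sum>j\<in>{1..n}. x i * y j * In_table n i j k)"
    unfolding In_mult_def split by simp
  also have "\<dots> = 2 * x n * y n * In_basis n k + (if k \<in> {1..<n} then x n * y k else 0)
      + (\<Sum>i\<in>{1..<n}. x i * y i) * In_basis n k"
    using row_i row_n by (simp add: sum_distrib_right)
  also have "\<dots> = x n * y k + (x n * y n + In_dot n x y) * In_basis n k"
    using y n by (auto simp: In_basis_def In_dot_def In_vecs_def algebra_simps)
  finally show "In_mult n x y k = x n * y k + (x n * y n + In_dot n x y) * In_basis n k" .
qed

lemma In_linear_op_in_In_vecs: "In_linear_op n R \<Longrightarrow> x \<in> In_vecs n \<Longrightarrow> R x \<in> In_vecs n"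
  unfolding In_linear_op_def by blast

lemma In_linear_op_scale:
  "In_linear_op n R \<Longrightarrow> x \<in> In_vecs n \<Longrightarrow> R (\<lambda>k. a * x k) = (\<lambda>k. a * R x k)"
  unfolding In_linear_op_def by blast

lemma In_linear_op_lincomb:
  assumes R: "In_linear_op n R" and x: "x \<in> In_vecs n" and y: "y \<in> In_vecs n"
  shows "R (\<lambda>k. a * x k + b * y k) = (\<lambda>k. a * R x k + b * R y k)"
proof -
  have "(\<lambda>k. a * x k) \<in> In_vecs n" "(\<lambda>k. b * y k) \<in> In_vecs n"
    using x y by (auto simp: In_vecs_def)
  moreover have "\<forall>u\<in>In_vecs n. \<forall>v\<in>In_vecs n. R (\<lambda>k. u k + v k) = (\<lambda>k. R u k + R v k)"
    using R unfolding In_linear_op_def by blast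
  ultimately have "R (\<lambda>k. a * x k + b * y k) = (\<lambda>k. R (\<lambda>k. a * x k) k + R (\<lambda>k. b * y k) k)"
    by simp
  then show ?thesis using In_linear_op_scale[OF R] x y by simp
qed

lemma In_linear_op_lincomb3:
  assumes R: "In_linear_op n R" and vecs: "x \<in> In_vecs n" "y \<in> In_vecs n" "z \<in> In_vecs n"
  shows "R (\<lambda>k. a * x k + b * y k + c * z k) = (\<lambda>k. a * R x k + b * R y k + c * R z k)"
proof -
  have "(\<lambda>k. a * x k + b * y k) \<in> In_vecs n" using vecs by (auto simp: In_vecs_def)
  from In_linear_op_lincomb[OF R this vecs(3), of 1 c] show ?thesis
    using In_linear_op_lincomb[OF R vecs(1,2)] by simp
qed

lemma In_linear_op_decompose:
  assumes R: "In_linear_op n R" and n: "1 \<le> n" and x: "x \<in> In_vecs n"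
  shows "R x = (\<lambda>k. R (In_proj n x) k + x n * R (In_basis n) k)"
proof -
  have "R x = R (\<lambda>k. 1 * In_proj n x k + x n * In_basis n k)" by (simp add: In_proj_def)
  also have "\<dots> = (\<lambda>k. 1 * R (In_proj n x) k + x n * R (In_basis n) k)"
    using In_linear_op_lincomb[OF R In_proj_in_In_vecs[OF x] In_basis_in_In_vecs[OF n order_refl]] .
  finally show ?thesis by simp
qed

lemma totally_real_sum_squares_eq_0:
  assumes "totally_real_field TYPE('a::field)" "finite A" "(\<Sum>i\<in>A. f i ^ 2) = (0::'a)"
  shows "\<forall>i\<in>A. f i = 0"
proof -
  obtain h where h: "bij_betw h {..<card A} A"
    using ex_bij_betw_nat_finite[OF assms(2)] by (auto simp: atLeast0LessThan)
  have "(\<Sum>i<card A. (f \<circ> h) i ^ 2) = 0"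
    using sum.reindex_bij_betw[OF h, of "\<lambda>i. f i ^ 2"] assms(3) by simp
  then have "\<forall>i<card A. f (h i) = 0"
    using assms(1) unfolding totally_real_field_def by fastforce
  then show ?thesis using h by (metis bij_betw_iff_bijections lessThan_iff)
qed

lemma totally_real_two_neq_zero:
  assumes "totally_real_field TYPE('a::field)"
  shows "(2::'a) \<noteq> 0"
  using totally_real_sum_squares_eq_0[OF assms, of "{0::nat, 1}" "\<lambda>_. 1"] by auto

lemma totally_real_square_add_In_dot_eq_0:
  assumes "totally_real_field TYPE('a::field)" and "c * c + In_dot n w w = (0::'a)"
  shows "c = 0" and "\<And>j. 1 \<le> j \<Longrightarrow> j < n \<Longrightarrow> w j = 0"
proof -
  let ?f = "\<lambda>i. if i = 0 then c else w i"
  have "(\<Sum>i\<in>insert 0 {1..<n}. ?f i ^ 2) = c * c + In_dot n w w"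
    by (simp add: In_dot_def power2_eq_square)
  with totally_real_sum_squares_eq_0[OF assms(1), of "insert 0 {1..<n}" ?f] assms(2)
  have "\<forall>i\<in>insert 0 {1..<n}. ?f i = 0" by simp
  then show "c = 0" and "\<And>j. 1 \<le> j \<Longrightarrow> j < n \<Longrightarrow> w j = 0" by auto
qed

lemma quadratically_closed_sqrt_minus_one:
  assumes "quadratically_closed TYPE('a::field)"
  obtains i where "i * i = (-1::'a)"
proof -
  obtain i :: 'a where "1 * i ^ 2 + 0 * i + 1 = 0"
    using assms unfolding quadratically_closed_def by (metis one_neq_zero)
  then have "i * i = -1" by (simp add: power2_eq_square eq_neg_iff_add_eq_0)
  then show ?thesis by (rule that)
qed

locale In_RB_operator =
  fixes n :: nat and lam :: "'a::field" and R :: "(nat \<Rightarrow> 'a) \<Rightarrow> nat \<Rightarrow> 'a"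
  assumes n_pos: "1 \<le> n" and RB: "In_RB n lam R"
begin

abbreviation e :: "nat \<Rightarrow> 'a" where "e \<equiv> In_basis n"
abbreviation \<rho> :: "nat \<Rightarrow> 'a" where "\<rho> \<equiv> R e"
abbreviation \<sigma> :: 'a where "\<sigma> \<equiv> \<rho> n"

lemma linear: "In_linear_op n R"
  using RB unfolding In_RB_def by blast

lemma R_in_In_vecs: "x \<in> In_vecs n \<Longrightarrow> R x \<in> In_vecs n"
  using In_linear_op_in_In_vecs[OF linear] .

lemma e_in_In_vecs: "e \<in> In_vecs n"
  using In_basis_in_In_vecs[OF n_pos order_refl] .

lemma \<rho>_in_In_vecs: "\<rho> \<in> In_vecs n"
  using R_in_In_vecs[OF e_in_In_vecs] .

lemma RB_eq:
  "x \<in> In_vecs n \<Longrightarrow> y \<in> In_vecs n \<Longrightarrow> In_mult n (R x) (R y) =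
     R (\<lambda>k. In_mult n (R x) y k + In_mult n x (R y) k + lam * In_mult n x y k)"
  using RB unfolding In_RB_def by blast

lemmas mult_eq = In_mult_eq[OF n_pos]

lemma In_mult_last: "y \<in> In_vecs n \<Longrightarrow> In_mult n x y n = 2 * (x n * y n) + In_dot n x y"
  by (simp add: mult_eq)

lemma RB_basis_basis: "2 * (\<sigma> * \<sigma>) + In_dot n \<rho> \<rho> = R \<rho> n + (3 * \<sigma> + 2 * lam) * \<sigma>"
proof -
  have "In_mult n \<rho> \<rho> = R (\<lambda>k. In_mult n \<rho> e k + In_mult n e \<rho> k + lam * In_mult n e e k)"
    using RB_eq[OF e_in_In_vecs e_in_In_vecs] .
  also have "(\<lambda>k. In_mult n \<rho> e k + In_mult n e \<rho> k + lam * In_mult n e e k)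
      = (\<lambda>k. 1 * \<rho> k + (3 * \<sigma> + 2 * lam) * e k)"
    using e_in_In_vecs \<rho>_in_In_vecs by (simp add: mult_eq fun_eq_iff algebra_simps)
  also have "R \<dots> = (\<lambda>k. 1 * R \<rho> k + (3 * \<sigma> + 2 * lam) * \<rho> k)"
    using In_linear_op_lincomb[OF linear \<rho>_in_In_vecs e_in_In_vecs] .
  finally show ?thesis
    using In_mult_last[OF \<rho>_in_In_vecs, of \<rho>] by simp
qed

lemma RB_perp_basis:
  assumes u: "u \<in> In_vecs n" "u n = 0"
  shows "(\<lambda>k. R u n * \<rho> k + (R u n * \<sigma> + In_dot n (R u) \<rho>) * e k)
       = (\<lambda>k. (2 * R u n + In_dot n u \<rho>) * \<rho> k)"
proof -
  have "In_mult n (R u) \<rho> = R (\<lambda>k. In_mult n (R u) e k + In_mult n u \<rho> k + lam * In_mult n u e k)"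
    using RB_eq[OF u(1) e_in_In_vecs] .
  also have "(\<lambda>k. In_mult n (R u) e k + In_mult n u \<rho> k + lam * In_mult n u e k)
      = (\<lambda>k. (2 * R u n + In_dot n u \<rho>) * e k)"
    using e_in_In_vecs \<rho>_in_In_vecs u by (simp add: mult_eq fun_eq_iff algebra_simps)
  also have "R \<dots> = (\<lambda>k. (2 * R u n + In_dot n u \<rho>) * \<rho> k)"
    using In_linear_op_scale[OF linear e_in_In_vecs] .
  finally show ?thesis using \<rho>_in_In_vecs by (simp add: mult_eq)
qed

lemma RB_perp_basis_coord:
  assumes u: "u \<in> In_vecs n" "u n = 0" and j: "1 \<le> j" "j < n"
  shows "(R u n + In_dot n u \<rho>) * \<rho> j = 0"
  using fun_cong[OF RB_perp_basis[OF u], of j] j by (simp add: algebra_simps)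

lemma RB_perp_basis_last:
  assumes u: "u \<in> In_vecs n" "u n = 0"
  shows "In_dot n (R u) \<rho> = In_dot n u \<rho> * \<sigma>"
  using fun_cong[OF RB_perp_basis[OF u], of n] by (simp add: algebra_simps)

lemma RB_basis_perp:
  assumes v: "v \<in> In_vecs n" "v n = 0"
  shows "2 * (\<sigma> * R v n) + In_dot n \<rho> (R v)
       = (\<sigma> + lam) * R v n + R (R v) n + (In_dot n \<rho> v + R v n) * \<sigma>"
proof -
  have Rv: "R v \<in> In_vecs n" using R_in_In_vecs[OF v(1)] .
  have "In_mult n \<rho> (R v) = R (\<lambda>k. In_mult n \<rho> v k + In_mult n e (R v) k + lam * In_mult n e v k)"
    using RB_eq[OF e_in_In_vecs v(1)] .
  also have "(\<lambda>k. In_mult n \<rho> v k + In_mult n e (R v) k + lam * In_mult n e v k)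
      = (\<lambda>k. (\<sigma> + lam) * v k + 1 * R v k + (In_dot n \<rho> v + R v n) * e k)"
    using v Rv by (simp add: mult_eq fun_eq_iff algebra_simps)
  also have "R \<dots> = (\<lambda>k. (\<sigma> + lam) * R v k + 1 * R (R v) k + (In_dot n \<rho> v + R v n) * \<rho> k)"
    using In_linear_op_lincomb3[OF linear v(1) Rv e_in_In_vecs] .
  finally show ?thesis
    using In_mult_last[OF Rv, of \<rho>] by simp
qed

lemma RB_perp_perp:
  assumes u: "u \<in> In_vecs n" "u n = 0"
  shows "R u n * R u n + In_dot n (R u) (R u) = (2 * In_dot n (R u) u + lam * In_dot n u u) * \<sigma>"
proof -
  have Ru: "R u \<in> In_vecs n" using R_in_In_vecs[OF u(1)] .
  have "In_mult n (R u) (R u) = R (\<lambda>k. In_mult n (R u) u k + In_mult n u (R u) k + lam * In_mult n u u k)"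
    using RB_eq[OF u(1) u(1)] .
  also have "(\<lambda>k. In_mult n (R u) u k + In_mult n u (R u) k + lam * In_mult n u u k)
      = (\<lambda>k. R u n * u k + (2 * In_dot n (R u) u + lam * In_dot n u u) * e k)"
    using u Ru by (simp add: mult_eq In_dot_commute[of n u "R u"] fun_eq_iff algebra_simps)
  also have "R \<dots> = (\<lambda>k. R u n * R u k + (2 * In_dot n (R u) u + lam * In_dot n u u) * \<rho> k)"
    using In_linear_op_lincomb[OF linear u(1) e_in_In_vecs] .
  finally show ?thesis
    using In_mult_last[OF Ru, of "R u"] by (simp add: algebra_simps)
qed

lemma R_last_coord_if_\<rho>_not_in_span:
  assumes j: "1 \<le> j" "j < n" "\<rho> j \<noteq> 0" and x: "x \<in> In_vecs n"
  shows "R x n = x n * \<sigma> - In_dot n x \<rho>"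
proof -
  have perp: "R u n = - In_dot n u \<rho>" if u: "u \<in> In_vecs n" "u n = 0" for u
    using RB_perp_basis_coord[OF u j(1,2)] j(3) by (simp add: eq_neg_iff_add_eq_0)
  show ?thesis
    using fun_cong[OF In_linear_op_decompose[OF linear n_pos x], of n]
      perp[OF In_proj_in_In_vecs[OF x] In_proj_last] by simp
qed

lemma \<rho>_in_span:
  assumes tr: "totally_real_field TYPE('a)" and j: "1 \<le> j" "j < n"
  shows "\<rho> j = 0"
proof (rule ccontr)
  assume "\<rho> j \<noteq> 0"
  note last = R_last_coord_if_\<rho>_not_in_span[OF j this]
  define d where "d = In_dot n \<rho> \<rho>"
  have "d \<noteq> 0"
    using totally_real_square_add_In_dot_eq_0(2)[OF tr, of 0 n \<rho>] j \<open>\<rho> j \<noteq> 0\<close> by (auto simp: d_def)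
  define p where "p = In_proj n \<rho>"
  have p: "p \<in> In_vecs n" "p n = 0" using In_proj_in_In_vecs[OF \<rho>_in_In_vecs] by (auto simp: p_def)
  have Rp: "R p \<in> In_vecs n" using R_in_In_vecs[OF p(1)] .
  have "In_dot n p \<rho> = d" by (simp add: p_def d_def)
  moreover have "In_dot n \<rho> p = d" using \<open>In_dot n p \<rho> = d\<close> by (simp add: In_dot_commute)
  moreover have "R p n = - d" using last[OF p(1)] p(2) \<open>In_dot n p \<rho> = d\<close> by simp
  moreover have "In_dot n \<rho> (R p) = d * \<sigma>"
    using RB_perp_basis_last[OF p] \<open>In_dot n p \<rho> = d\<close> by (simp add: In_dot_commute)
  moreover have "R (R p) n = - (2 * (d * \<sigma>))"
    using last[OF Rp] RB_perp_basis_last[OF p] \<open>In_dot n p \<rho> = d\<close> \<open>R p n = - d\<close> by simp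
  ultimately have "(2 * \<sigma> + lam) * d = 0"
    using RB_basis_perp[OF p] by (simp add: algebra_simps)
  then have lam: "lam = - 2 * \<sigma>"
    using \<open>d \<noteq> 0\<close> by (simp add: eq_neg_iff_add_eq_0 add.commute)
  have "2 * (\<sigma> * \<sigma> + d) = 0"
    using RB_basis_basis last[OF \<rho>_in_In_vecs] lam by (simp add: d_def algebra_simps)
  then have "\<sigma> * \<sigma> + In_dot n \<rho> \<rho> = 0"
    using totally_real_two_neq_zero[OF tr] unfolding d_def by (metis mult_eq_0_iff)
  then show False
    using totally_real_square_add_In_dot_eq_0(2)[OF tr] j \<open>\<rho> j \<noteq> 0\<close> by blast
qed

lemma \<rho>_eq_scaled_basis:
  assumes tr: "totally_real_field TYPE('a)"
  shows "\<rho> = (\<lambda>k. \<sigma> * e k)"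
  using \<rho>_in_span[OF tr] \<rho>_in_In_vecs e_in_In_vecs
  by (intro In_vecs_eqI) (auto simp: In_vecs_def)

lemma \<sigma>_mult_\<sigma>_add_lam_eq_0:
  assumes tr: "totally_real_field TYPE('a)"
  shows "\<sigma> * (\<sigma> + lam) = 0"
proof -
  have "R \<rho> = (\<lambda>k. \<sigma> * \<rho> k)"
    using In_linear_op_scale[OF linear e_in_In_vecs] \<rho>_eq_scaled_basis[OF tr] by metis
  moreover have "In_dot n \<rho> \<rho> = 0"
    by (subst \<rho>_eq_scaled_basis[OF tr]) (simp add: In_dot_def)
  ultimately have "2 * (\<sigma> * (\<sigma> + lam)) = 0"
    using RB_basis_basis by (simp add: algebra_simps)
  then show ?thesis using totally_real_two_neq_zero[OF tr] by simp
qed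

lemma R_eq_scalar:
  assumes tr: "totally_real_field TYPE('a)" and x: "x \<in> In_vecs n"
  shows "R x = (\<lambda>k. \<sigma> * x k)"
proof -
  have perp: "R u = (\<lambda>k. \<sigma> * u k)" if u: "u \<in> In_vecs n" "u n = 0" for u
  proof -
    \<comment> \<open>since \<sigma> * \<sigma> = - lam * \<sigma>, the identity for (u, u) says that R u - \<sigma> u is isotropic\<close>
    have "R u n * R u n + In_dot n (\<lambda>k. R u k - \<sigma> * u k) (\<lambda>k. R u k - \<sigma> * u k)
        = \<sigma> * (\<sigma> + lam) * In_dot n u u"
      unfolding In_dot_diff_scaled_self using RB_perp_perp[OF u] by (simp add: algebra_simps)
    then have "R u n * R u n + In_dot n (\<lambda>k. R u k - \<sigma> * u k) (\<lambda>k. R u k - \<sigma> * u k) = 0"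
      using \<sigma>_mult_\<sigma>_add_lam_eq_0[OF tr] by simp
    from totally_real_square_add_In_dot_eq_0[OF tr this] show ?thesis
      using u R_in_In_vecs[OF u(1)] by (intro In_vecs_eqI) (auto simp: In_vecs_def)
  qed
  define s where "s = \<sigma>"
  have "\<rho> = (\<lambda>k. s * e k)" unfolding s_def by (rule \<rho>_eq_scaled_basis[OF tr])
  then show ?thesis
    using In_linear_op_decompose[OF linear n_pos x] perp[OF In_proj_in_In_vecs[OF x] In_proj_last]
    unfolding s_def[symmetric] by (simp add: In_proj_def algebra_simps)
qed

theorem trivial:
  assumes "totally_real_field TYPE('a)"
  shows "In_trivial_op n lam R"
proof -
  have "\<sigma> = 0 \<or> \<sigma> = - lam" using \<sigma>_mult_\<sigma>_add_lam_eq_0[OF assms] by (simp add: eq_neg_iff_add_eq_0)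
  then show ?thesis
    using R_eq_scalar[OF assms] unfolding In_trivial_op_def In_zero_op_def by auto
qed

end

definition In_rank_one_op :: "nat \<Rightarrow> 'a::field \<Rightarrow> 'a \<Rightarrow> (nat \<Rightarrow> 'a) \<Rightarrow> nat \<Rightarrow> 'a" where
  "In_rank_one_op n lam i x = (\<lambda>k. x 1 * (lam * (i * In_basis n k - In_basis 1 k)))"

definition In_isotropic_op :: "'a::field \<Rightarrow> (nat \<Rightarrow> 'a) \<Rightarrow> nat \<Rightarrow> 'a" where
  "In_isotropic_op i x = (\<lambda>k. (x 1 + i * x 2) * (In_basis 1 k + i * In_basis 2 k))"

lemma In_RB_In_rank_one_op:
  fixes lam i :: "'a::field"
  assumes n: "2 \<le> n" and i: "i * i = -1"
  shows "In_RB n lam (In_rank_one_op n lam i)"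
proof -
  have ii: "i * (i * z) = - z" for z using i by (metis mult.assoc mult_minus_left mult_1)
  define R where "R = In_rank_one_op n lam i"
  have n1: "n \<noteq> 1" "1 \<le> n" using n by auto
  have R_in: "R x \<in> In_vecs n" for x using n by (auto simp: R_def In_rank_one_op_def In_vecs_def)
  have linear: "In_linear_op n R"
    unfolding In_linear_op_def using R_in by (auto simp: R_def In_rank_one_op_def fun_eq_iff algebra_simps)
  have dot: "In_dot n (R x) (R y) = x 1 * y 1 * (lam * lam)" for x y
    using n by (subst In_dot_supported[of "{1}"]) (auto simp: R_def In_rank_one_op_def)
  have "In_mult n (R x) (R y) = R (\<lambda>k. In_mult n (R x) y k + In_mult n x (R y) k + lam * In_mult n x y k)"
    if x: "x \<in> In_vecs n" and y: "y \<in> In_vecs n" for x y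
  proof -
    have "In_mult n (R x) (R y) = (\<lambda>k. x 1 * y 1 * (i * lam) * (lam * (i * In_basis n k - In_basis 1 k)))"
      using R_in dot n1 by (simp add: In_mult_eq fun_eq_iff)
        (simp add: R_def In_rank_one_op_def algebra_simps ii)
    also have "\<dots> = R (\<lambda>k. In_mult n (R x) y k + In_mult n x (R y) k + lam * In_mult n x y k)"
      using R_in x y n1 by (simp add: In_mult_eq fun_eq_iff)
        (simp add: R_def In_rank_one_op_def algebra_simps ii)
    finally show ?thesis .
  qed
  with linear show ?thesis unfolding In_RB_def R_def by blast
qed

lemma In_rank_one_op_nontrivial:
  fixes lam :: "'a::field"
  assumes n: "2 \<le> n" and lam: "lam \<noteq> 0"
  shows "\<not> In_trivial_op n lam (In_rank_one_op n lam i)"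
proof -
  have basis: "In_basis 1 \<in> In_vecs n" "In_basis n \<in> In_vecs n"
    using n by (auto intro: In_basis_in_In_vecs)
  have "In_rank_one_op n lam i (In_basis 1) 1 \<noteq> 0"
    using n lam by (simp add: In_rank_one_op_def)
  then have "\<not> In_zero_op n (In_rank_one_op n lam i)"
    using basis(1) unfolding In_zero_op_def by metis
  moreover have "In_rank_one_op n lam i (In_basis n) n \<noteq> - lam * In_basis n n"
    using n lam by (simp add: In_rank_one_op_def)
  then have "\<not> (\<forall>x\<in>In_vecs n. In_rank_one_op n lam i x = (\<lambda>k. - lam * x k))"
    using basis(2) by metis
  ultimately show ?thesis unfolding In_trivial_op_def by blast
qed

lemma In_RB_In_isotropic_op:
  fixes i :: "'a::field"
  assumes n: "3 \<le> n" and i: "i * i = -1"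
  shows "In_RB n 0 (In_isotropic_op i)"
proof -
  have ii: "i * (i * z) = - z" for z using i by (metis mult.assoc mult_minus_left mult_1)
  define R where "R = In_isotropic_op i"
  have n1: "n \<noteq> 1" "n \<noteq> 2" "1 \<le> n" using n by auto
  have R_in: "R x \<in> In_vecs n" for x using n by (auto simp: R_def In_isotropic_op_def In_vecs_def)
  have R_last: "R x n = 0" for x using n1 by (simp add: R_def In_isotropic_op_def)
  have linear: "In_linear_op n R"
    unfolding In_linear_op_def using R_in by (auto simp: R_def In_isotropic_op_def fun_eq_iff algebra_simps)
  have dot: "In_dot n (R x) (R y) = 0" for x y
    using n by (subst In_dot_supported[of "{1, 2}"]) (auto simp: R_def In_isotropic_op_def algebra_simps ii)
  have "In_mult n (R x) (R y) = R (\<lambda>k. In_mult n (R x) y k + In_mult n x (R y) k + 0 * In_mult n x y k)"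
    if x: "x \<in> In_vecs n" and y: "y \<in> In_vecs n" for x y
    using R_in x y n1 R_last dot
    by (simp add: In_mult_eq fun_eq_iff) (simp add: R_def In_isotropic_op_def algebra_simps ii)
  with linear show ?thesis unfolding In_RB_def R_def by blast
qed

lemma In_isotropic_op_nonzero:
  assumes "1 \<le> n"
  shows "\<not> In_zero_op n (In_isotropic_op i)"
proof -
  have "In_isotropic_op i (In_basis 1) 1 \<noteq> 0" by (simp add: In_isotropic_op_def)
  moreover have "In_basis 1 \<in> In_vecs n" using In_basis_in_In_vecs[OF order_refl assms] .
  ultimately show ?thesis unfolding In_zero_op_def by metis
qed

theorem corollary2:
  assumes char_ne_2: "(2::'a::field) \<noteq> 0"
  shows "(totally_real_field TYPE('a) \<longrightarrow>
            (\<forall>n\<ge>1. \<forall>lam::'a. \<forall>R. In_RB n lam R \<longrightarrow> In_trivial_op n lam R)) \<and>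
         (quadratically_closed TYPE('a) \<longrightarrow>
            (\<forall>n\<ge>2. \<forall>lam::'a. lam \<noteq> 0 \<longrightarrow> (\<exists>R. In_RB n lam R \<and> \<not> In_trivial_op n lam R)) \<and>
            (\<forall>n\<ge>3. \<exists>R. In_RB n (0::'a) R \<and> \<not> In_zero_op n R))"
proof (intro conjI impI allI)
  fix n :: nat and lam :: 'a and R
  assume "totally_real_field TYPE('a)" "1 \<le> n" "In_RB n lam R"
  then show "In_trivial_op n lam R" by (simp add: In_RB_operator.trivial In_RB_operator_def)
next
  fix n :: nat and lam :: 'a
  assume qc: "quadratically_closed TYPE('a)" and n: "2 \<le> n" and lam: "lam \<noteq> 0"
  obtain i :: 'a where i: "i * i = -1" using quadratically_closed_sqrt_minus_one[OF qc] .
  show "\<exists>R. In_RB n lam R \<and> \<not> In_trivial_op n lam R"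
    using In_RB_In_rank_one_op[OF n i] In_rank_one_op_nontrivial[OF n lam] by blast
next
  fix n :: nat
  assume qc: "quadratically_closed TYPE('a)" and n: "3 \<le> n"
  obtain i :: 'a where i: "i * i = -1" using quadratically_closed_sqrt_minus_one[OF qc] .
  show "\<exists>R. In_RB n (0::'a) R \<and> \<not> In_zero_op n R"
    using In_RB_In_isotropic_op[OF n i] In_isotropic_op_nonzero[of n i] n by fastforce
qed

end
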